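(* Let $(X,\Sigma)$ be a measurable space, $\mathcal{E}\subseteq\Sigma$ a paving, $\mathbf{F}_0^2\subseteq\mathbf{F}\times\mathbf{F}$ a nonempty set of pairs, $\boldsymbol{\mu}=(\mu_t)_{t\ge0}$ a nonincreasing family of monotone measures on $\Sigma$, and $\mathscr{A}=\{\mathsf{A}(\cdot|E)\colon E\in\mathcal{E}\}$ a family of conditional aggregation operators which is $1$-quasi-subadditive on $\mathbf{F}_0^2$. Then $$\boldsymbol{\mu}_{\mathscr{A}}(f+g,t)\le\boldsymbol{\mu}_{\mathscr{A}}(f,0.5t)\vee\boldsymbol{\mu}_{\mathscr{A}}(g,0.5t)$$ for every $t\ge0$ and every $(f,g)\in\mathbf{F}_0^2$.
   Context: $a\vee b=\max\{a,b\}$. $\Sigma^0=\Sigma\setminus\{\emptyset\}$. $\mathbf{F}$ denotes the set of all $\Sigma$-measurable, nonnegative, bounded functions $f\colon X\to[0,\infty)$. A monotone measure is a map $\mu\colon\Sigma\to[0,\infty]$ with $\mu(B)\le\mu(C)$ whenever $B\subseteq C$, $\mu(\emptyset)=0$ and $\mu(X)>0$; $\boldsymbol{\mu}$ is nonincreasing if $\mu_s(E)\ge\mu_t(E)$ for all $E\in\Sigma$ and $s<t$. For $E\in\Sigma^0$, a conditional aggregation operator (CAO) w.r.t. $E$ is a map $\mathsf{A}(\cdot|E)\colon\mathbf{F}\to[0,\infty]$ such that (C1) $\mathsf{A}(f|E)\le\mathsf{A}(g|E)$ whenever $f(x)\le g(x)$ for all $x\in E$, and (C2) $\mathsf{A}(\mathbf{1}_{X\setminus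 E}|E)=0$. A paving is a family $\mathcal{E}\subseteq\Sigma$ with $\emptyset\in\mathcal{E}$; $\mathcal{E}^0=\mathcal{E}\setminus\{\emptyset\}$. The family $\mathscr{A}$ consists of CAOs $\mathsf{A}(\cdot|E)$ w.r.t. $E$ for $E\in\mathcal{E}^0$, with the convention $\mathsf{A}(\cdot|\emptyset)=\infty$. It is $1$-quasi-subadditive on $\mathbf{F}_0^2$ if $\mathsf{A}(f+g|E)\le\mathsf{A}(f|E)+\mathsf{A}(g|E)$ for all $(f,g)\in\mathbf{F}_0^2$ and all $E\in\mathcal{E}^0$. The generalized level measure is $\boldsymbol{\mu}_{\mathscr{A}}(f,t)=\sup\{\mu_t(E)\colon \mathsf{A}(f|E)\ge t,\ E\in\mathcal{E}\}$ for $t\ge0$. *)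

theory Defs
  imports "HOL-Analysis.Analysis"
begin

definition nnbF :: "'a measure \<Rightarrow> ('a \<Rightarrow> real) set" where
  "nnbF M = {f. f \<in> borel_measurable M \<and> (\<forall>x\<in>space M. 0 \<le> f x)
                 \<and> (\<exists>C. \<forall>x\<in>space M. f x \<le> C)}"

definition monotone_measure :: "'a measure \<Rightarrow> ('a set \<Rightarrow> ennreal) \<Rightarrow> bool" where
  "monotone_measure M \<mu> \<longleftrightarrow>
     (\<forall>B\<in>sets M. \<forall>C\<in>sets M. B \<subseteq> C \<longrightarrow> \<mu> B \<le> \<mu> C) \<and> \<mu> {} = 0 \<and> \<mu> (space M) > 0"

definition nonincr_family :: "'a measure \<Rightarrow> (real \<Rightarrow> 'a set \<Rightarrow> ennreal) \<Rightarrow> bool" where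
  "nonincr_family M \<mu> \<longleftrightarrow>
     (\<forall>t\<ge>0. monotone_measure M (\<mu> t)) \<and>
     (\<forall>s t E. 0 \<le> s \<longrightarrow> s < t \<longrightarrow> E \<in> sets M \<longrightarrow> \<mu> t E \<le> \<mu> s E)"

definition paving :: "'a measure \<Rightarrow> 'a set set \<Rightarrow> bool" where
  "paving M \<E> \<longleftrightarrow> \<E> \<subseteq> sets M \<and> {} \<in> \<E>"

text \<open>Conditional aggregation operator w.r.t. E (A E f stands for A(f|E)).\<close>
definition CAO :: "'a measure \<Rightarrow> 'a set \<Rightarrow> (('a \<Rightarrow> real) \<Rightarrow> ennreal) \<Rightarrow> bool" where
  "CAO M E Af \<longleftrightarrow>
     (\<forall>f\<in>nnbF M. \<forall>g\<in>nnbF M. (\<forall>x\<in>E. f x \<le> g x) \<longrightarrow> Af f \<le> Af g) \<and>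
     Af (indicator (space M - E)) = 0"

definition CAO_family :: "'a measure \<Rightarrow> 'a set set \<Rightarrow> ('a set \<Rightarrow> ('a \<Rightarrow> real) \<Rightarrow> ennreal) \<Rightarrow> bool" where
  "CAO_family M \<E> A \<longleftrightarrow> (\<forall>E\<in>\<E> - {{}}. CAO M E (A E))"

definition Aext :: "('a set \<Rightarrow> ('a \<Rightarrow> real) \<Rightarrow> ennreal) \<Rightarrow> 'a set \<Rightarrow> ('a \<Rightarrow> real) \<Rightarrow> ennreal" where
  "Aext A E f = (if E = {} then \<infinity> else A E f)"

definition quasi_subadd1 :: "'a set set \<Rightarrow> ('a set \<Rightarrow> ('a \<Rightarrow> real) \<Rightarrow> ennreal)
     \<Rightarrow> (('a \<Rightarrow> real) \<times> ('a \<Rightarrow> real)) set \<Rightarrow> bool" where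
  "quasi_subadd1 \<E> A F02 \<longleftrightarrow>
     (\<forall>(f,g)\<in>F02. \<forall>E\<in>\<E> - {{}}. A E (\<lambda>x. f x + g x) \<le> A E f + A E g)"

definition gen_level_measure :: "'a set set \<Rightarrow> (real \<Rightarrow> 'a set \<Rightarrow> ennreal)
     \<Rightarrow> ('a set \<Rightarrow> ('a \<Rightarrow> real) \<Rightarrow> ennreal) \<Rightarrow> ('a \<Rightarrow> real) \<Rightarrow> real \<Rightarrow> ennreal" where
  "gen_level_measure \<E> \<mu> A f t = (SUP E\<in>{E\<in>\<E>. Aext A E f \<ge> ennreal t}. \<mu> t E)"

end

theory Submission
  imports Defs
begin

text \<open>Quasi-subadditivity gives A(f + g|E) \<le> A(f|E) + A(g|E), so if the left side reaches t,
  one of the two summands reaches t/2; on the empty set the convention A(.|\<emptyset>) = \<infinity> makes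
  this automatic. Hence every E contributing to the level measure of f + g at t also contributes
  to that of f or of g at t/2, while \<mu> t E \<le> \<mu> (t/2) E because the family is nonincreasing.\<close>

lemma ennreal_half_le_or_half_le:
  fixes a b :: ennreal
  assumes "ennreal t \<le> a + b"
  shows "ennreal (t / 2) \<le> a \<or> ennreal (t / 2) \<le> b"
proof (rule ccontr)
  assume "\<not> ?thesis"
  then have "a + b < ennreal (t / 2) + ennreal (t / 2)"
    by (intro add_strict_mono) (simp_all add: not_le)
  also have "\<dots> \<le> ennreal t"
    by (cases "0 \<le> t") (simp_all add: ennreal_neg flip: ennreal_plus)
  finally show False
    using assms by simp
qed

lemma nonincr_family_antimono:
  assumes "nonincr_family M \<mu>" "0 \<le> s" "s \<le> t" "E \<in> sets M"
  shows "\<mu> t E \<le> \<mu> s E"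
  using assms unfolding nonincr_family_def
  by (cases "s = t") auto

lemma Aext_add_level_split:
  assumes "quasi_subadd1 \<E> A F02" "(f, g) \<in> F02" "E \<in> \<E>"
    and "ennreal t \<le> Aext A E (\<lambda>x. f x + g x)"
  shows "ennreal (t / 2) \<le> Aext A E f \<or> ennreal (t / 2) \<le> Aext A E g"
proof (cases "E = {}")
  case False
  then have "A E (\<lambda>x. f x + g x) \<le> A E f + A E g"
    using assms(1-3) unfolding quasi_subadd1_def by fastforce
  then have "ennreal t \<le> A E f + A E g"
    using assms(4) False unfolding Aext_def by simp
  then show ?thesis
    using False unfolding Aext_def by (simp add: ennreal_half_le_or_half_le)
qed (simp add: Aext_def)

lemma le_gen_level_measure:
  assumes "E \<in> \<E>" "ennreal t \<le> Aext A E f"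
  shows "\<mu> t E \<le> gen_level_measure \<E> \<mu> A f t"
  unfolding gen_level_measure_def using assms by (intro SUP_upper) auto

theorem corollary3p15:
  fixes M :: "'a measure" and \<E> :: "'a set set"
    and F02 :: "(('a \<Rightarrow> real) \<times> ('a \<Rightarrow> real)) set"
    and \<mu> :: "real \<Rightarrow> 'a set \<Rightarrow> ennreal"
    and A :: "'a set \<Rightarrow> ('a \<Rightarrow> real) \<Rightarrow> ennreal"
  assumes "paving M \<E>"
    and "F02 \<subseteq> nnbF M \<times> nnbF M" and "F02 \<noteq> {}"
    and "nonincr_family M \<mu>"
    and "CAO_family M \<E> A"
    and "quasi_subadd1 \<E> A F02"
    and "0 \<le> t" and "(f, g) \<in> F02"
  shows "gen_level_measure \<E> \<mu> A (\<lambda>x. f x + g x) t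
           \<le> max (gen_level_measure \<E> \<mu> A f (t / 2)) (gen_level_measure \<E> \<mu> A g (t / 2))"
  unfolding gen_level_measure_def [of _ _ _ "\<lambda>x. f x + g x"]
proof (rule SUP_least)
  fix E
  assume "E \<in> {E \<in> \<E>. ennreal t \<le> Aext A E (\<lambda>x. f x + g x)}"
  then have E: "E \<in> \<E>" and level: "ennreal t \<le> Aext A E (\<lambda>x. f x + g x)"
    by auto
  have "\<mu> t E \<le> \<mu> (t / 2) E"
    using E assms(1,4,7) unfolding paving_def by (intro nonincr_family_antimono) auto
  also have "\<mu> (t / 2) E
      \<le> max (gen_level_measure \<E> \<mu> A f (t / 2)) (gen_level_measure \<E> \<mu> A g (t / 2))"
    using Aext_add_level_split [OF assms(6,8) E level] le_gen_level_measure [OF E]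
    by (meson max.coboundedI1 max.coboundedI2)
  finally show "\<mu> t E
      \<le> max (gen_level_measure \<E> \<mu> A f (t / 2)) (gen_level_measure \<E> \<mu> A g (t / 2))" .
qed

end
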